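(* Reduction Rule 2 is safe: if \((G',k')\) is obtained from an instance \((G,k)\) of Vertex Cover by applying Reduction Rule 2, then \(k'+MM(G')-2LP(G')\leq k+MM(G)-2LP(G)\).
   Context: All graphs are finite, undirected and simple. An instance of Vertex Cover is a pair \((G,k)\), \(k\in\mathbb{N}\). \(MM(G)\) is the size of a maximum matching. \(LPVC(G)\) is the LP: minimize \(\sum_v x_v\) subject to \(x_u+x_v\ge1\) for each edge \(\{u,v\}\) and \(0\le x_v\le1\); \(LP(G)\) is its optimum value. For \(X\subseteq V(G)\), \(N(X)\) is the set of vertices outside \(X\) adjacent to some vertex of \(X\); for an independent set \(Z\), \(\mathrm{surplus}(Z)=|N(Z)|-|Z|\). Reduction Rule 2 applies to \((G,k)\) when (i) the all-\(\frac12\) assignment is the unique optimum solution of \(LPVC(G)\), and (ii) there is an independent set \(Z\subseteq V(G)\) with \(\mathrm{surplus}(Z)=1\) such that \(N(Z)\) is not an independent set in \(G\); it then outputs \(G'=G[V(G)\setminus(Z\cup N(Z))]\) and \(k'=k-|N(Z)|\). *)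

theory Defs
  imports Complex_Main
begin

definition graph :: "'a set \<Rightarrow> 'a set set \<Rightarrow> bool" where
  "graph V E \<longleftrightarrow> finite V \<and> (\<forall>e\<in>E. e \<subseteq> V \<and> card e = 2)"

definition matching :: "'a set set \<Rightarrow> 'a set set \<Rightarrow> bool" where
  "matching E M \<longleftrightarrow> M \<subseteq> E \<and> (\<forall>e1\<in>M. \<forall>e2\<in>M. e1 \<noteq> e2 \<longrightarrow> e1 \<inter> e2 = {})"

definition MM :: "'a set \<Rightarrow> 'a set set \<Rightarrow> nat" where
  "MM V E = Max {card M | M. matching E M}"

definition lp_feasible :: "'a set \<Rightarrow> 'a set set \<Rightarrow> ('a \<Rightarrow> real) \<Rightarrow> bool" where
  "lp_feasible V E x \<longleftrightarrow>
     (\<forall>u v. {u, v} \<in> E \<longrightarrow> x u + x v \<ge> 1) \<and> (\<forall>v\<in>V. 0 \<le> x v \<and> x v \<le> 1)"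

definition LP :: "'a set \<Rightarrow> 'a set set \<Rightarrow> real" where
  "LP V E = (INF x \<in> {x. lp_feasible V E x}. sum x V)"

definition lp_optimal :: "'a set \<Rightarrow> 'a set set \<Rightarrow> ('a \<Rightarrow> real) \<Rightarrow> bool" where
  "lp_optimal V E x \<longleftrightarrow> lp_feasible V E x \<and> (\<forall>y. lp_feasible V E y \<longrightarrow> sum x V \<le> sum y V)"

text \<open>The all-1/2 assignment is the unique optimum solution of LPVC(G)
  (solutions are identified by their values on V).\<close>
definition half_unique_opt :: "'a set \<Rightarrow> 'a set set \<Rightarrow> bool" where
  "half_unique_opt V E \<longleftrightarrow> lp_optimal V E (\<lambda>_. 1/2) \<and>
     (\<forall>x. lp_optimal V E x \<longrightarrow> (\<forall>v\<in>V. x v = 1/2))"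

definition indep :: "'a set set \<Rightarrow> 'a set \<Rightarrow> bool" where
  "indep E X \<longleftrightarrow> (\<forall>u\<in>X. \<forall>v\<in>X. {u, v} \<notin> E)"

definition nbhd :: "'a set \<Rightarrow> 'a set set \<Rightarrow> 'a set \<Rightarrow> 'a set" where
  "nbhd V E X = {v \<in> V - X. \<exists>u\<in>X. {u, v} \<in> E}"

definition surplus :: "'a set \<Rightarrow> 'a set set \<Rightarrow> 'a set \<Rightarrow> int" where
  "surplus V E Z = int (card (nbhd V E Z)) - int (card Z)"

definition ind_edges :: "'a set set \<Rightarrow> 'a set \<Rightarrow> 'a set set" where
  "ind_edges E S = {e \<in> E. e \<subseteq> S}"

definition rule2 :: "'a set \<Rightarrow> 'a set set \<Rightarrow> int \<Rightarrow> 'a set \<Rightarrow> 'a set \<Rightarrow> 'a set set \<Rightarrow> int \<Rightarrow> bool" where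
  "rule2 V E k Z V' E' k' \<longleftrightarrow>
     half_unique_opt V E \<and> Z \<subseteq> V \<and> indep E Z \<and> surplus V E Z = 1 \<and>
     \<not> indep E (nbhd V E Z) \<and>
     V' = V - (Z \<union> nbhd V E Z) \<and> E' = ind_edges E V' \<and>
     k' = k - int (card (nbhd V E Z))"

end

theory Submission
  imports Defs
begin

text \<open>Because the all-\<open>1/2\<close> vector is the unique optimum of LPVC(G), every nonempty
  independent set of G has positive surplus: otherwise the assignment that is 0 on the set,
  1 on its neighbourhood and \<open>1/2\<close> elsewhere would be a second optimum. Hence
  \<open>LP(G) = |V|/2\<close>, and by Hall's theorem Z can be matched into N(Z), so that
  \<open>MM(G) \<ge> MM(G') + |Z|\<close>. An independent set I of G' together with Z is independent in G,
  whence \<open>|I| + |Z| < |N(I \<union> Z)| \<le> |N\<^sub>G\<^sub>'(I)| + |Z| + 1\<close>: independent sets of G' have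
  nonnegative surplus. Hall's theorem then sends the vertices of G' injectively, hence
  bijectively, to neighbours, and summing the edge constraints along this permutation gives
  \<open>LP(G') \<ge> |V'|/2\<close>. With \<open>k' = k - |N(Z)|\<close> and \<open>|V| = |V'| + |Z| + |N(Z)|\<close> the
  inequality follows.\<close>

section \<open>Hall's theorem\<close>

definition hall_condition :: "'a set \<Rightarrow> ('a \<Rightarrow> 'b set) \<Rightarrow> bool" where
  "hall_condition A N \<longleftrightarrow> (\<forall>S\<subseteq>A. card S \<le> card (\<Union>(N ` S)))"

lemma hall_condition_subset: "hall_condition A N \<Longrightarrow> B \<subseteq> A \<Longrightarrow> hall_condition B N"
  unfolding hall_condition_def by blast

lemma hall_condition_Diff_critical:
  assumes hall: "hall_condition A N" and "finite A" and fin: "\<forall>a\<in>A. finite (N a)"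
    and S: "S \<subseteq> A" and critical: "card (\<Union>(N ` S)) = card S"
  shows "hall_condition (A - S) (\<lambda>a. N a - \<Union>(N ` S))"
  unfolding hall_condition_def
proof (intro allI impI)
  fix T assume T: "T \<subseteq> A - S"
  have TS: "T \<union> S \<subseteq> A" and disj: "T \<inter> S = {}" using T S by auto
  have fin_TS: "finite (T \<union> S)" using TS \<open>finite A\<close> finite_subset by blast
  have fin_U: "finite (\<Union>(N ` (T \<union> S)))" using TS fin fin_TS by auto
  have "card T + card S = card (T \<union> S)"
    using fin_TS disj by (simp add: card_Un_disjoint)
  also have "\<dots> \<le> card (\<Union>(N ` (T \<union> S)))" using hall TS unfolding hall_condition_def by blast
  also have "\<dots> = card (\<Union>(N ` T) - \<Union>(N ` S)) + card (\<Union>(N ` S))"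
    using fin_U card_Diff_subset[of "\<Union>(N ` S)" "\<Union>(N ` (T \<union> S))"]
      card_mono[OF fin_U, of "\<Union>(N ` S)"] finite_subset[OF _ fin_U, of "\<Union>(N ` S)"]
    by (auto simp: Un_Diff image_Un)
  finally have "card T \<le> card (\<Union>(N ` T) - \<Union>(N ` S))" using critical by simp
  moreover have "\<Union>((\<lambda>a. N a - \<Union>(N ` S)) ` T) = \<Union>(N ` T) - \<Union>(N ` S)" by auto
  ultimately show "card T \<le> card (\<Union>((\<lambda>a. N a - \<Union>(N ` S)) ` T))" by simp
qed

lemma hall_condition_Diff_singleton:
  assumes hall: "hall_condition A N" and "a \<in> A"
    and slack: "\<And>S. S \<subseteq> A \<Longrightarrow> S \<noteq> {} \<Longrightarrow> S \<noteq> A \<Longrightarrow> card S < card (\<Union>(N ` S))"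
  shows "hall_condition (A - {a}) (\<lambda>x. N x - {b})"
  unfolding hall_condition_def
proof (intro allI impI)
  fix T assume T: "T \<subseteq> A - {a}"
  show "card T \<le> card (\<Union>((\<lambda>x. N x - {b}) ` T))"
  proof (cases "T = {}")
    case False
    with T \<open>a \<in> A\<close> have "card T < card (\<Union>(N ` T))" by (intro slack) auto
    moreover have "\<Union>((\<lambda>x. N x - {b}) ` T) = \<Union>(N ` T) - {b}" by auto
    ultimately show ?thesis using card_Diff_singleton_if[of "\<Union>(N ` T)" b]
      by (cases "finite (\<Union>(N ` T))") auto
  qed simp
qed

lemma inj_on_fun_upd_insert:
  assumes "inj_on f A" and "b \<notin> f ` A" and "a \<notin> A"
  shows "inj_on (f(a := b)) (insert a A)"
proof -
  have "inj_on (f(a := b)) A" using assms(1,3) by (auto simp: inj_on_def)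
  then show ?thesis using assms(2,3) by (auto simp: inj_on_insert)
qed

lemma inj_on_piecewise:
  assumes "inj_on f S" and "inj_on g T" and "S \<inter> T = {}" and "f ` S \<inter> g ` T = {}"
  shows "inj_on (\<lambda>a. if a \<in> S then f a else g a) (S \<union> T)"
proof -
  let ?h = "\<lambda>a. if a \<in> S then f a else g a"
  have "inj_on ?h S" by (rule inj_on_cong[THEN iffD2, OF _ assms(1)]) simp
  moreover have "inj_on ?h T" using assms(3) by (intro inj_on_cong[THEN iffD2, OF _ assms(2)]) auto
  moreover have "?h ` S \<inter> ?h ` T = {}" using assms(3,4) by auto
  ultimately show ?thesis using assms(3) by (simp add: inj_on_Un Diff_triv Int_commute)
qed

text \<open>Halmos--Vaughan: if some proper nonempty subset S is tight, S and \<open>A - S\<close> (with the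
  neighbours of S removed) are matched separately; otherwise every proper subset has slack and
  any first choice \<open>a \<mapsto> b\<close> can be extended.\<close>

theorem Hall_distinct_representatives:
  assumes "finite A" and "\<forall>a\<in>A. finite (N a)" and "hall_condition A N"
  shows "\<exists>f. inj_on f A \<and> (\<forall>a\<in>A. f a \<in> N a)"
  using assms
proof (induction "card A" arbitrary: A N rule: less_induct)
  case less
  show ?case
  proof (cases "\<exists>S. S \<subseteq> A \<and> S \<noteq> {} \<and> S \<noteq> A \<and> card (\<Union>(N ` S)) = card S")
    case True
    then obtain S where S: "S \<subseteq> A" "S \<noteq> {}" "S \<noteq> A" and critical: "card (\<Union>(N ` S)) = card S"
      by blast
    define N' where "N' = (\<lambda>a. N a - \<Union>(N ` S))"
    have "finite S" using S less.prems(1) finite_subset by blast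
    moreover have "card S < card A" using S less.prems(1) psubset_card_mono by blast
    moreover have "\<forall>a\<in>S. finite (N a)" "hall_condition S N"
      using less.prems S(1) by (auto intro: hall_condition_subset)
    ultimately obtain f1 where f1: "inj_on f1 S" "\<forall>a\<in>S. f1 a \<in> N a"
      using less.hyps[of S N] by blast
    have "A - S \<subset> A" using S by blast
    then have "card (A - S) < card A" by (rule psubset_card_mono[OF less.prems(1)])
    moreover have "hall_condition (A - S) N'"
      unfolding N'_def using less.prems(3,1,2) S(1) critical by (rule hall_condition_Diff_critical)
    moreover have "finite (A - S)" "\<forall>a\<in>A - S. finite (N' a)"
      using less.prems by (auto simp: N'_def)
    ultimately obtain f2 where f2: "inj_on f2 (A - S)" "\<forall>a\<in>A - S. f2 a \<in> N' a"
      using less.hyps[of "A - S" N'] by blast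
    define f where "f a = (if a \<in> S then f1 a else f2 a)" for a
    have "inj_on f (S \<union> (A - S))"
      unfolding f_def using f1 f2 by (intro inj_on_piecewise) (auto simp: N'_def)
    moreover have "S \<union> (A - S) = A" using S(1) by blast
    moreover have "\<forall>a\<in>A. f a \<in> N a" using f1 f2 by (auto simp: f_def N'_def)
    ultimately show ?thesis by metis
  next
    case no_critical: False
    show ?thesis
    proof (cases "A = {}")
      case False
      then obtain a where a: "a \<in> A" by blast
      then have "card {a} \<le> card (N a)" using less.prems(3) unfolding hall_condition_def by force
      then obtain b where b: "b \<in> N a" by fastforce
      have "card (A - {a}) < card A" using less.prems(1) a by (rule card_Diff1_less)
      moreover have "hall_condition (A - {a}) (\<lambda>x. N x - {b})"
        using less.prems(3) a
      proof (rule hall_condition_Diff_singleton)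
        fix S assume "S \<subseteq> A" "S \<noteq> {}" "S \<noteq> A"
        then show "card S < card (\<Union>(N ` S))"
          using no_critical less.prems(3) unfolding hall_condition_def by (metis order_le_neq_trans)
      qed
      moreover have "finite (A - {a})" "\<forall>x\<in>A - {a}. finite (N x - {b})"
        using less.prems by auto
      ultimately obtain f where f: "inj_on f (A - {a})" "\<forall>x\<in>A - {a}. f x \<in> N x - {b}"
        using less.hyps[of "A - {a}" "\<lambda>x. N x - {b}"] by blast
      have "inj_on (f(a := b)) (insert a (A - {a}))" using f by (intro inj_on_fun_upd_insert) auto
      then have "inj_on (f(a := b)) A" using a by (simp add: insert_absorb)
      moreover have "\<forall>x\<in>A. (f(a := b)) x \<in> N x" using f b by auto
      ultimately show ?thesis by blast
    qed simp
  qed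
qed

section \<open>Matchings, fractional covers and surplus\<close>

lemma finite_edges: "graph V E \<Longrightarrow> finite E"
  unfolding graph_def by (meson PowI finite_Pow_iff finite_subset subsetI)

lemma finite_matching_cards: "finite E \<Longrightarrow> finite {card M | M. matching E M}"
proof -
  assume "finite E"
  moreover have "{M. matching E M} \<subseteq> Pow E" by (auto simp: matching_def)
  ultimately have "finite {M. matching E M}" by (meson finite_Pow_iff finite_subset)
  moreover have "{card M | M. matching E M} = card ` {M. matching E M}" by auto
  ultimately show ?thesis by simp
qed

lemma card_le_MM: "finite E \<Longrightarrow> matching E M \<Longrightarrow> card M \<le> MM V E"
  unfolding MM_def by (rule Max_ge) (auto intro: finite_matching_cards)

lemma MM_attained: "finite E \<Longrightarrow> \<exists>M. matching E M \<and> card M = MM V E"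
proof -
  assume "finite E"
  moreover have "matching E {}" by (simp add: matching_def)
  ultimately have "MM V E \<in> {card M | M. matching E M}"
    unfolding MM_def by (intro Max_in finite_matching_cards) auto
  then show ?thesis by auto
qed

lemma matching_Un:
  assumes "matching E M1" and "matching E M2" and cross: "\<forall>e1\<in>M1. \<forall>e2\<in>M2. e1 \<inter> e2 = {}"
  shows "matching E (M1 \<union> M2)"
  unfolding matching_def
proof (intro conjI ballI impI)
  show "M1 \<union> M2 \<subseteq> E" using assms(1,2) by (simp add: matching_def)
  fix e1 e2 assume "e1 \<in> M1 \<union> M2" "e2 \<in> M1 \<union> M2" "e1 \<noteq> e2"
  moreover have "e1 \<inter> e2 = {}" if "e1 \<in> M1" "e2 \<in> M1" "e1 \<noteq> e2" for e1 e2
    using assms(1) that by (simp add: matching_def)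
  moreover have "e1 \<inter> e2 = {}" if "e1 \<in> M2" "e2 \<in> M2" "e1 \<noteq> e2" for e1 e2
    using assms(2) that by (simp add: matching_def)
  ultimately show "e1 \<inter> e2 = {}" using cross by (metis Int_commute UnE)
qed

lemma matching_representatives:
  assumes inj: "inj_on g Z" and edges: "\<forall>a\<in>Z. {a, g a} \<in> E" and outside: "g ` Z \<inter> Z = {}"
  shows "matching E ((\<lambda>a. {a, g a}) ` Z)" and "card ((\<lambda>a. {a, g a}) ` Z) = card Z"
proof -
  have not_rep: "a \<noteq> g b" if "a \<in> Z" "b \<in> Z" for a b using that outside by blast
  show "matching E ((\<lambda>a. {a, g a}) ` Z)"
    unfolding matching_def
  proof (intro conjI ballI impI)
    show "(\<lambda>a. {a, g a}) ` Z \<subseteq> E" using edges by blast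
    fix e1 e2 assume "e1 \<in> (\<lambda>a. {a, g a}) ` Z" "e2 \<in> (\<lambda>a. {a, g a}) ` Z" "e1 \<noteq> e2"
    then obtain a b where ab: "a \<in> Z" "b \<in> Z" "a \<noteq> b" and "e1 = {a, g a}" "e2 = {b, g b}"
      by blast
    moreover have "g a \<noteq> g b" using inj ab by (meson inj_onD)
    ultimately show "e1 \<inter> e2 = {}" using not_rep ab by auto
  qed
  have "inj_on (\<lambda>a. {a, g a}) Z"
  proof (rule inj_onI)
    fix a b assume "a \<in> Z" "b \<in> Z" "{a, g a} = {b, g b}"
    then show "a = b" using not_rep[of a b] by blast
  qed
  then show "card ((\<lambda>a. {a, g a}) ` Z) = card Z" by (rule card_image)
qed

lemma LP_eq_if_lp_optimal:
  assumes "lp_optimal V E x"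
  shows "LP V E = sum x V"
proof -
  have bdd: "bdd_below ((\<lambda>y. sum y V) ` {y. lp_feasible V E y})"
    using assms unfolding lp_optimal_def by (intro bdd_belowI2[where m = "sum x V"]) auto
  have "LP V E \<le> sum x V"
    unfolding LP_def using assms unfolding lp_optimal_def by (intro cINF_lower[OF bdd]) auto
  moreover have "sum x V \<le> LP V E"
    unfolding LP_def using assms unfolding lp_optimal_def by (intro cINF_greatest) auto
  ultimately show ?thesis by simp
qed

lemma LP_eq_half_card:
  assumes "half_unique_opt V E"
  shows "LP V E = card V / 2"
proof -
  have "LP V E = (\<Sum>v\<in>V. 1 / 2)"
    using assms unfolding half_unique_opt_def by (intro LP_eq_if_lp_optimal) simp
  then show ?thesis by simp
qed

lemma half_card_le_LP:
  assumes "finite V" and "inj_on f V" and "f ` V \<subseteq> V" and "\<forall>v\<in>V. {v, f v} \<in> E"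
  shows "card V / 2 \<le> LP V E"
proof -
  have "lp_feasible V E (\<lambda>_. 1)" by (simp add: lp_feasible_def)
  then have "{y. lp_feasible V E y} \<noteq> {}" by blast
  then show ?thesis unfolding LP_def
  proof (rule cINF_greatest)
    fix y assume "y \<in> {y. lp_feasible V E y}"
    then have y: "lp_feasible V E y" by simp
    have "f ` V = V" using assms by (simp add: card_image card_subset_eq)
    then have "sum y V = sum (y \<circ> f) V" using assms(2) by (metis sum.reindex)
    have "real (card V) = (\<Sum>v\<in>V. 1)" by simp
    also have "\<dots> \<le> (\<Sum>v\<in>V. y v + y (f v))"
      using assms(4) y by (intro sum_mono) (simp add: lp_feasible_def)
    also have "\<dots> = 2 * sum y V"
      using \<open>sum y V = sum (y \<circ> f) V\<close> by (simp add: sum.distrib)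
    finally show "card V / 2 \<le> sum y V" by simp
  qed
qed

definition neighbours :: "'a set \<Rightarrow> 'a set set \<Rightarrow> 'a \<Rightarrow> 'a set" where
  "neighbours V E v = {w \<in> V. {v, w} \<in> E}"

lemma UN_neighbours_indep: "indep E S \<Longrightarrow> \<Union>(neighbours V E ` S) = nbhd V E S"
  unfolding neighbours_def nbhd_def indep_def by blast

lemma hall_condition_neighbours:
  assumes "finite V" and surplus_nonneg: "\<And>I. I \<subseteq> V \<Longrightarrow> indep E I \<Longrightarrow> card I \<le> card (nbhd V E I)"
  shows "hall_condition V (neighbours V E)"
  unfolding hall_condition_def
proof (intro allI impI)
  fix S assume S: "S \<subseteq> V"
  define U where "U = \<Union>(neighbours V E ` S)"
  have "finite U" using \<open>finite V\<close> by (rule rev_finite_subset) (auto simp: U_def neighbours_def)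
  have "finite S" using S \<open>finite V\<close> finite_subset by blast
  have "indep E (S - U)" using S unfolding indep_def U_def neighbours_def by blast
  moreover have "nbhd V E (S - U) \<subseteq> U - S"
  proof
    fix w assume "w \<in> nbhd V E (S - U)"
    then obtain u where u: "u \<in> S - U" "{u, w} \<in> E" "w \<in> V" by (auto simp: nbhd_def)
    then have "w \<in> U" by (auto simp: U_def neighbours_def)
    moreover have "w \<notin> S"
      using u S by (auto simp: U_def neighbours_def insert_commute)
    ultimately show "w \<in> U - S" by blast
  qed
  ultimately have "card (S - U) \<le> card (U - S)"
    using S surplus_nonneg[of "S - U"] card_mono[OF finite_Diff[OF \<open>finite U\<close>]]
    by (meson Diff_subset order_trans)
  then show "card S \<le> card U"
    using card_Int_Diff[OF \<open>finite S\<close>, of U] card_Int_Diff[OF \<open>finite U\<close>, of S]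
    by (simp add: Int_commute)
qed

lemma half_card_le_LP_if_surplus_nonneg:
  assumes "finite V" and "\<And>I. I \<subseteq> V \<Longrightarrow> indep E I \<Longrightarrow> card I \<le> card (nbhd V E I)"
  shows "card V / 2 \<le> LP V E"
proof -
  have "\<forall>v\<in>V. finite (neighbours V E v)" using assms(1) by (simp add: neighbours_def)
  then obtain f where "inj_on f V" and f: "\<forall>v\<in>V. f v \<in> neighbours V E v"
    using Hall_distinct_representatives[OF assms(1) _ hall_condition_neighbours[OF assms]] by blast
  moreover have "f ` V \<subseteq> V" "\<forall>v\<in>V. {v, f v} \<in> E" using f by (auto simp: neighbours_def)
  ultimately show ?thesis using assms(1) by (intro half_card_le_LP)
qed

definition half_shift :: "'a set \<Rightarrow> 'a set set \<Rightarrow> 'a set \<Rightarrow> 'a \<Rightarrow> real" where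
  "half_shift V E I v = (if v \<in> I then 0 else if v \<in> nbhd V E I then 1 else 1 / 2)"

lemma lp_feasible_half_shift:
  assumes "graph V E" and "indep E I"
  shows "lp_feasible V E (half_shift V E I)"
  unfolding lp_feasible_def
proof (intro conjI allI impI ballI)
  fix u v assume e: "{u, v} \<in> E"
  then have "u \<in> V" "v \<in> V" using assms(1) unfolding graph_def by auto
  moreover have "\<not> (u \<in> I \<and> v \<in> I)" using assms(2) e unfolding indep_def by blast
  ultimately have "(u \<in> I \<longrightarrow> v \<in> nbhd V E I) \<and> (v \<in> I \<longrightarrow> u \<in> nbhd V E I)"
    using e by (auto simp: nbhd_def insert_commute)
  then show "1 \<le> half_shift V E I u + half_shift V E I v"
    by (auto simp: half_shift_def nbhd_def)
qed (auto simp: half_shift_def)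

lemma sum_half_shift:
  assumes "finite V" and "I \<subseteq> V"
  shows "sum (half_shift V E I) V = (real (card V) + real (card (nbhd V E I)) - real (card I)) / 2"
proof -
  let ?x = "half_shift V E I" and ?N = "nbhd V E I"
  have N: "?N \<subseteq> V - I" by (auto simp: nbhd_def)
  have fin: "finite I" "finite ?N" using assms N by (auto intro: finite_subset)
  have "sum ?x V = sum ?x (V - I) + sum ?x I"
    using assms by (simp add: sum.subset_diff)
  moreover have "sum ?x (V - I) = sum ?x (V - I - ?N) + sum ?x ?N"
    using assms N by (simp add: sum.subset_diff)
  moreover have "sum ?x I = 0" by (simp add: half_shift_def)
  moreover have "sum ?x ?N = sum (\<lambda>_. 1) ?N"
    using N by (intro sum.cong) (auto simp: half_shift_def)
  moreover have "sum ?x (V - I - ?N) = sum (\<lambda>_. 1 / 2) (V - I - ?N)"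
    by (intro sum.cong) (auto simp: half_shift_def)
  moreover have "card (V - I - ?N) = card (V - I) - card ?N" "card (V - I) = card V - card I"
    using assms fin N by (simp_all add: card_Diff_subset)
  moreover have "card ?N \<le> card (V - I)" "card I \<le> card V"
    using assms N by (simp_all add: card_mono)
  ultimately show ?thesis by (simp add: field_simps flip: of_nat_add)
qed

lemma card_lt_card_nbhd:
  assumes "graph V E" and opt: "half_unique_opt V E"
    and I: "I \<subseteq> V" "indep E I" "I \<noteq> {}"
  shows "card I < card (nbhd V E I)"
proof (rule ccontr)
  assume "\<not> card I < card (nbhd V E I)"
  moreover have "finite V" using assms(1) by (simp add: graph_def)
  ultimately have "sum (half_shift V E I) V \<le> (\<Sum>v\<in>V. 1 / 2)"
    using I(1) by (simp add: sum_half_shift)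
  moreover have "lp_feasible V E (half_shift V E I)"
    using assms(1) I(2) by (rule lp_feasible_half_shift)
  ultimately have "lp_optimal V E (half_shift V E I)"
    using opt unfolding half_unique_opt_def lp_optimal_def by (meson order_trans)
  then have "\<forall>v\<in>V. half_shift V E I v = 1 / 2" using opt by (simp add: half_unique_opt_def)
  moreover obtain a where "a \<in> I" using I(3) by blast
  ultimately show False using I(1) by (force simp: half_shift_def)
qed

lemma indep_Un_removed:
  assumes "indep E Z" and I: "I \<subseteq> V - (Z \<union> nbhd V E Z)"
    and "indep (ind_edges E (V - (Z \<union> nbhd V E Z))) I"
  shows "indep E (I \<union> Z)"
  unfolding indep_def
proof (intro ballI)
  fix u v assume "u \<in> I \<union> Z" "v \<in> I \<union> Z"
  moreover have "{u, v} \<notin> E" if "u \<in> I" "v \<in> I" for u v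
    using that assms(3) I unfolding indep_def ind_edges_def by blast
  moreover have "{u, v} \<notin> E" if "u \<in> I" "v \<in> Z" for u v
    using that I by (auto simp: nbhd_def insert_commute)
  ultimately show "{u, v} \<notin> E" using assms(1) unfolding indep_def by (metis UnE insert_commute)
qed

lemma nbhd_Un_subset_removed:
  fixes V Z :: "'a set" and E :: "'a set set"
  defines "V' \<equiv> V - (Z \<union> nbhd V E Z)"
  assumes "I \<subseteq> V'"
  shows "nbhd V E (I \<union> Z) \<subseteq> nbhd V' (ind_edges E V') I \<union> nbhd V E Z"
proof
  fix w assume "w \<in> nbhd V E (I \<union> Z)"
  then obtain u where u: "u \<in> I \<union> Z" "{u, w} \<in> E" and w: "w \<in> V" "w \<notin> I \<union> Z"
    by (auto simp: nbhd_def)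
  show "w \<in> nbhd V' (ind_edges E V') I \<union> nbhd V E Z"
  proof (cases "u \<in> Z \<or> w \<in> nbhd V E Z")
    case True
    then show ?thesis using u w by (auto simp: nbhd_def)
  next
    case False
    then have "u \<in> I" "w \<in> V'" using u w by (auto simp: V'_def)
    then show ?thesis using u w assms(2) by (auto simp: nbhd_def ind_edges_def)
  qed
qed

lemma card_le_card_nbhd_removed:
  fixes V Z :: "'a set" and E :: "'a set set"
  defines "V' \<equiv> V - (Z \<union> nbhd V E Z)"
  assumes "graph V E" and "half_unique_opt V E"
    and Z: "Z \<subseteq> V" "indep E Z" "surplus V E Z = 1"
    and I: "I \<subseteq> V'" "indep (ind_edges E V') I"
  shows "card I \<le> card (nbhd V' (ind_edges E V') I)"
proof -
  have fin: "finite V" using assms(2) by (simp add: graph_def)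
  have card_N: "card (nbhd V E Z) = card Z + 1" using Z(3) by (simp add: surplus_def)
  then have "Z \<noteq> {}" by (auto simp: nbhd_def)
  moreover have "I \<union> Z \<subseteq> V" "indep E (I \<union> Z)"
    using Z I indep_Un_removed[OF Z(2)] by (auto simp: V'_def)
  ultimately have "card (I \<union> Z) < card (nbhd V E (I \<union> Z))"
    using assms(2,3) by (intro card_lt_card_nbhd) auto
  also have "\<dots> \<le> card (nbhd V' (ind_edges E V') I \<union> nbhd V E Z)"
    using fin I(1) nbhd_Un_subset_removed[of I V Z E]
    by (intro card_mono) (auto simp: V'_def nbhd_def)
  also have "\<dots> \<le> card (nbhd V' (ind_edges E V') I) + card Z + 1"
    using card_Un_le card_N by (metis add.assoc)
  finally have "card (I \<union> Z) < card (nbhd V' (ind_edges E V') I) + card Z + 1" .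
  moreover have "card (I \<union> Z) = card I + card Z"
    using I(1) Z(1) fin by (intro card_Un_disjoint) (auto simp: V'_def intro: finite_subset)
  ultimately show ?thesis by linarith
qed

lemma MM_removed_add_card_le:
  fixes V Z :: "'a set" and E :: "'a set set"
  defines "V' \<equiv> V - (Z \<union> nbhd V E Z)"
  assumes G: "graph V E" and opt: "half_unique_opt V E" and Z: "Z \<subseteq> V" "indep E Z"
  shows "MM V' (ind_edges E V') + card Z \<le> MM V E"
proof -
  have fin: "finite V" "finite E" "finite Z" using G Z(1) finite_edges finite_subset
    by (auto simp: graph_def)
  have "hall_condition Z (neighbours V E)"
    unfolding hall_condition_def
  proof (intro allI impI)
    fix S assume "S \<subseteq> Z"
    then have "S \<subseteq> V" "indep E S" using Z by (auto simp: indep_def)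
    then show "card S \<le> card (\<Union>(neighbours V E ` S))"
      using card_lt_card_nbhd[OF G opt, of S] by (cases "S = {}") (auto simp: UN_neighbours_indep)
  qed
  moreover have "\<forall>a\<in>Z. finite (neighbours V E a)" using fin by (simp add: neighbours_def)
  ultimately obtain g where g: "inj_on g Z" "\<forall>a\<in>Z. g a \<in> neighbours V E a"
    using Hall_distinct_representatives[OF fin(3)] by blast
  have g_nbhd: "g ` Z \<subseteq> nbhd V E Z"
    using UN_neighbours_indep[OF Z(2), of V] g(2) by blast
  have "\<forall>a\<in>Z. {a, g a} \<in> E" "g ` Z \<inter> Z = {}"
    using g(2) g_nbhd by (auto simp: neighbours_def nbhd_def)
  note Z_matching = matching_representatives[OF g(1) this]
  obtain M where M: "matching (ind_edges E V') M" "card M = MM V' (ind_edges E V')"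
    using MM_attained[of "ind_edges E V'"] fin(2) by (auto simp: ind_edges_def)
  have M_E: "matching E M" using M(1) by (auto simp: matching_def ind_edges_def)
  have "\<forall>e\<in>M. \<forall>e'\<in>(\<lambda>a. {a, g a}) ` Z. e \<inter> e' = {}"
    using M(1) g_nbhd by (auto simp: matching_def ind_edges_def V'_def)
  then have "matching E (M \<union> (\<lambda>a. {a, g a}) ` Z)" "M \<inter> (\<lambda>a. {a, g a}) ` Z = {}"
    using matching_Un[OF M_E Z_matching(1)] by auto
  moreover have "finite M" using M_E fin(2) by (auto simp: matching_def intro: finite_subset)
  ultimately show ?thesis
    using card_le_MM[OF fin(2)] card_Un_disjoint Z_matching(2) M(2) fin(3) by fastforce
qed

lemma card_Diff_closed_nbhd:
  assumes "finite V" and "Z \<subseteq> V"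
  shows "card V = card (V - (Z \<union> nbhd V E Z)) + card Z + card (nbhd V E Z)"
proof -
  have sub: "Z \<union> nbhd V E Z \<subseteq> V" and disj: "Z \<inter> nbhd V E Z = {}"
    using assms(2) by (auto simp: nbhd_def)
  then have fin: "finite Z" "finite (nbhd V E Z)" using assms(1) by (auto intro: finite_subset)
  have "card V = card (V - (Z \<union> nbhd V E Z)) + card (Z \<union> nbhd V E Z)"
    using assms(1) sub by (metis card_Diff_subset card_mono finite_subset le_add_diff_inverse2)
  also have "card (Z \<union> nbhd V E Z) = card Z + card (nbhd V E Z)"
    using fin disj by (rule card_Un_disjoint)
  finally show ?thesis by simp
qed

theorem lemma8:
  fixes V :: "'a set" and E :: "'a set set" and k :: nat and Z :: "'a set"
    and V' :: "'a set" and E' :: "'a set set" and k' :: int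
  assumes "graph V E"
    and "rule2 V E (int k) Z V' E' k'"
  shows "real_of_int k' + real (MM V' E') - 2 * LP V' E'
           \<le> real k + real (MM V E) - 2 * LP V E"
proof -
  from assms(2) have opt: "half_unique_opt V E" and Z: "Z \<subseteq> V" "indep E Z" "surplus V E Z = 1"
    and V': "V' = V - (Z \<union> nbhd V E Z)" and E': "E' = ind_edges E V'"
    and k': "k' = int k - int (card (nbhd V E Z))"
    unfolding rule2_def by auto
  have fin: "finite V" using assms(1) by (simp add: graph_def)
  have "LP V E = card V / 2" using opt by (rule LP_eq_half_card)
  moreover have "card V' / 2 \<le> LP V' E'"
    unfolding V' E' using fin
    by (intro half_card_le_LP_if_surplus_nonneg card_le_card_nbhd_removed assms(1) opt Z) auto
  moreover have "MM V' E' + card Z \<le> MM V E"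
    unfolding V' E' using assms(1) opt Z(1,2) by (rule MM_removed_add_card_le)
  moreover have "card V = card V' + card Z + card (nbhd V E Z)"
    unfolding V' using fin Z(1) by (rule card_Diff_closed_nbhd)
  ultimately show ?thesis unfolding k' by simp
qed

end
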